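(* (1) Let $(D,\dashv,\vdash)$ be a pre-dialgebra of type I. Then setting $a\prec b=a\dashv b$ and $a\succ b=a\vdash b-a\dashv b$ makes $(D,\prec,\succ)$ a dendriform algebra. (2) Let $(D,\dashv,\vdash)$ be a pre-dialgebra of type III. Then setting $a\succ b=a\vdash b$ and $a\prec b=a\dashv b-a\vdash b$ makes $(D,\prec,\succ)$ a dendriform algebra. (3) Conversely, any dendriform algebra $(E,\prec,\succ)$ with $\prec$ associative is a pre-dialgebra of type I with $a\dashv b=a\prec b$, $a\vdash b=a\prec b+a\succ b$; and any dendriform algebra with $\succ$ associative is a pre-dialgebra of type III with $a\vdash b=a\succ b$, $a\dashv b=a\prec b+a\succ b$.
   Context: All spaces are $k$-vector spaces and operations bilinear. A dialgebra is a vector space with two associative operations $\dashv,\vdash$ satisfying (1) $x\dashv(y\dashv z)=x\dashv(y\vdash z)$, (2) $(x\vdash y)\dashv z=x\vdash(y\dashv z)$, (3) $(x\dashv y)\vdash z=(x\vdash y)\vdash z$. A pre-dialgebra of type I (resp. type III) is a vector space with two associative operations $\dashv,\vdash$ satisfying axioms (1) and (2) (resp. (2) and (3)). A dendriform algebra is a vector space $E$ with two operations $\prec,\succ$ satisfying $(a\prec b)\prec c=a\prec(b\prec c)+a\prec(b\succ c)$, $(a\succ b)\prec c=a\succ(b\prec c)$, and $(a\prec b)\succ c+(a\succ b)\succ c=a\succ(b\succ c)$ for all $a,b,c$. *)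

theory Defs
  imports Main "HOL.Vector_Spaces"
begin

definition bilinear_op :: "('k::field \<Rightarrow> 'v::ab_group_add \<Rightarrow> 'v) \<Rightarrow> ('v \<Rightarrow> 'v \<Rightarrow> 'v) \<Rightarrow> bool" where
  "bilinear_op sc m \<longleftrightarrow> (\<forall>a. Vector_Spaces.linear sc sc (m a)) \<and> (\<forall>b. Vector_Spaces.linear sc sc (\<lambda>a. m a b))"

definition assoc_op :: "('v \<Rightarrow> 'v \<Rightarrow> 'v) \<Rightarrow> bool" where
  "assoc_op m \<longleftrightarrow> (\<forall>x y z. m (m x y) z = m x (m y z))"

text \<open>Pre-dialgebra of type I: two associative bilinear operations (left = dashv, right = vdash)
  satisfying axioms (1) and (2).\<close>
definition pre_dialgebra_I :: "('k::field \<Rightarrow> 'v::ab_group_add \<Rightarrow> 'v) \<Rightarrow> ('v \<Rightarrow> 'v \<Rightarrow> 'v) \<Rightarrow> ('v \<Rightarrow> 'v \<Rightarrow> 'v) \<Rightarrow> bool" where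
  "pre_dialgebra_I sc dl dr \<longleftrightarrow> vector_space sc \<and> bilinear_op sc dl \<and> bilinear_op sc dr
     \<and> assoc_op dl \<and> assoc_op dr
     \<and> (\<forall>x y z. dl x (dl y z) = dl x (dr y z))
     \<and> (\<forall>x y z. dl (dr x y) z = dr x (dl y z))"

text \<open>Pre-dialgebra of type III: axioms (2) and (3).\<close>
definition pre_dialgebra_III :: "('k::field \<Rightarrow> 'v::ab_group_add \<Rightarrow> 'v) \<Rightarrow> ('v \<Rightarrow> 'v \<Rightarrow> 'v) \<Rightarrow> ('v \<Rightarrow> 'v \<Rightarrow> 'v) \<Rightarrow> bool" where
  "pre_dialgebra_III sc dl dr \<longleftrightarrow> vector_space sc \<and> bilinear_op sc dl \<and> bilinear_op sc dr
     \<and> assoc_op dl \<and> assoc_op dr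
     \<and> (\<forall>x y z. dl (dr x y) z = dr x (dl y z))
     \<and> (\<forall>x y z. dr (dl x y) z = dr (dr x y) z)"

text \<open>Dendriform algebra (prec = pl, succ = sr).\<close>
definition dendriform :: "('k::field \<Rightarrow> 'v::ab_group_add \<Rightarrow> 'v) \<Rightarrow> ('v \<Rightarrow> 'v \<Rightarrow> 'v) \<Rightarrow> ('v \<Rightarrow> 'v \<Rightarrow> 'v) \<Rightarrow> bool" where
  "dendriform sc pl sr \<longleftrightarrow> vector_space sc \<and> bilinear_op sc pl \<and> bilinear_op sc sr
     \<and> (\<forall>a b c. pl (pl a b) c = pl a (pl b c) + pl a (sr b c))
     \<and> (\<forall>a b c. pl (sr a b) c = sr a (pl b c))
     \<and> (\<forall>a b c. sr (pl a b) c + sr (sr a b) c = sr a (sr b c))"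

end

theory Submission
  imports Defs
begin

text \<open>The two converse directions rest on two observations: the sum
  \<open>a \<prec> b + a \<succ> b\<close> of a dendriform algebra is always associative, and if \<open>\<prec>\<close>
  is associative the first dendriform axiom forces \<open>a \<prec> (b \<succ> c) = 0\<close> (dually,
  associativity of \<open>\<succ>\<close> forces \<open>(a \<prec> b) \<succ> c = 0\<close>), which is exactly what
  axioms (1) and (3) of a pre-dialgebra require.\<close>

lemma bilinear_op_linear:
  assumes "bilinear_op sc m"
  shows bilinear_op_linear_right: "Vector_Spaces.linear sc sc (m a)"
    and bilinear_op_linear_left: "Vector_Spaces.linear sc sc (\<lambda>a. m a b)"
  using assms unfolding bilinear_op_def by auto

lemma bilinear_op_vector_space: "bilinear_op sc m \<Longrightarrow> vector_space sc"
  using bilinear_op_linear_right Vector_Spaces.linear_iff by blast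

lemma bilinear_op_distribs:
  assumes "bilinear_op sc m"
  shows "m (x + y) z = m x z + m y z" "m x (y + z) = m x y + m x z"
    and "m (x - y) z = m x z - m y z" "m x (y - z) = m x y - m x z"
proof -
  have right: "module_hom sc sc (m x)"
    using bilinear_op_linear_right[OF assms] module_hom_iff_linear by blast
  have left: "module_hom sc sc (\<lambda>a. m a z)"
    using bilinear_op_linear_left[OF assms] module_hom_iff_linear by blast
  show "m (x + y) z = m x z + m y z" "m (x - y) z = m x z - m y z"
    using module_hom.add[OF left] module_hom.diff[OF left] by simp_all
  show "m x (y + z) = m x y + m x z" "m x (y - z) = m x y - m x z"
    using module_hom.add[OF right] module_hom.diff[OF right] by simp_all
qed

lemma
  assumes f: "bilinear_op sc f" and g: "bilinear_op sc g"
  shows bilinear_op_add: "bilinear_op sc (\<lambda>a b. f a b + g a b)"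
    and bilinear_op_diff: "bilinear_op sc (\<lambda>a b. f a b - g a b)"
proof -
  interpret vector_space_pair sc sc
    using bilinear_op_vector_space[OF f] by (simp add: vector_space_pair_def)
  show "bilinear_op sc (\<lambda>a b. f a b + g a b)" "bilinear_op sc (\<lambda>a b. f a b - g a b)"
    unfolding bilinear_op_def
    using linear_compose_add linear_compose_sub bilinear_op_linear[OF f] bilinear_op_linear[OF g]
    by blast+
qed

lemma pre_dialgebra_I_dendriform:
  assumes "pre_dialgebra_I sc dl dr"
  shows "dendriform sc dl (\<lambda>a b. dr a b - dl a b)"
proof -
  from assms have dl: "bilinear_op sc dl" and dr: "bilinear_op sc dr"
    and "assoc_op dl" "assoc_op dr"
    and "\<And>x y z. dl x (dl y z) = dl x (dr y z)"
    and "\<And>x y z. dl (dr x y) z = dr x (dl y z)"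
    unfolding pre_dialgebra_I_def by blast+
  then show ?thesis
    using bilinear_op_diff[OF dr dl] bilinear_op_vector_space[OF dl]
    unfolding dendriform_def assoc_op_def
    by (simp add: bilinear_op_distribs[OF dl] bilinear_op_distribs[OF dr])
qed

lemma pre_dialgebra_III_dendriform:
  assumes "pre_dialgebra_III sc dl dr"
  shows "dendriform sc (\<lambda>a b. dl a b - dr a b) dr"
proof -
  from assms have dl: "bilinear_op sc dl" and dr: "bilinear_op sc dr"
    and "assoc_op dl" "assoc_op dr"
    and "\<And>x y z. dl (dr x y) z = dr x (dl y z)"
    and "\<And>x y z. dr (dl x y) z = dr (dr x y) z"
    unfolding pre_dialgebra_III_def by blast+
  then show ?thesis
    using bilinear_op_diff[OF dl dr] bilinear_op_vector_space[OF dl]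
    unfolding dendriform_def assoc_op_def
    by (simp add: bilinear_op_distribs[OF dl] bilinear_op_distribs[OF dr])
qed

lemma dendriform_sum_assoc:
  assumes "dendriform sc pl sr"
  shows "assoc_op (\<lambda>a b. pl a b + sr a b)"
  unfolding assoc_op_def
proof (intro allI)
  fix a b c
  from assms have pl: "bilinear_op sc pl" and sr: "bilinear_op sc sr"
    and ax1: "pl (pl a b) c = pl a (pl b c) + pl a (sr b c)"
    and ax2: "pl (sr a b) c = sr a (pl b c)"
    and ax3: "sr (pl a b) c + sr (sr a b) c = sr a (sr b c)"
    unfolding dendriform_def by blast+
  have "pl (pl a b + sr a b) c + sr (pl a b + sr a b) c
      = pl (pl a b) c + pl (sr a b) c + (sr (pl a b) c + sr (sr a b) c)"
    by (simp add: bilinear_op_distribs[OF pl] bilinear_op_distribs[OF sr] algebra_simps)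
  also have "\<dots> = pl a (pl b c) + pl a (sr b c) + sr a (pl b c) + sr a (sr b c)"
    by (simp only: ax1 ax2 ax3)
  also have "\<dots> = pl a (pl b c + sr b c) + sr a (pl b c + sr b c)"
    by (simp add: bilinear_op_distribs[OF pl] bilinear_op_distribs[OF sr] algebra_simps)
  finally show "pl (pl a b + sr a b) c + sr (pl a b + sr a b) c
      = pl a (pl b c + sr b c) + sr a (pl b c + sr b c)" .
qed

lemma dendriform_assoc_left_imp_left_right_eq_0:
  assumes "dendriform sc pl sr" and "assoc_op pl"
  shows "pl a (sr b c) = 0"
  using assms unfolding dendriform_def assoc_op_def by (metis add_cancel_left_right)

lemma dendriform_assoc_right_imp_right_left_eq_0:
  assumes "dendriform sc pl sr" and "assoc_op sr"
  shows "sr (pl a b) c = 0"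
  using assms unfolding dendriform_def assoc_op_def by (metis add_cancel_right_left)

lemma dendriform_assoc_left_pre_dialgebra_I:
  assumes "dendriform sc pl sr" and "assoc_op pl"
  shows "pre_dialgebra_I sc pl (\<lambda>a b. pl a b + sr a b)"
proof -
  from assms(1) have pl: "bilinear_op sc pl" and sr: "bilinear_op sc sr"
    and ax2: "\<And>a b c. pl (sr a b) c = sr a (pl b c)"
    unfolding dendriform_def by blast+
  have "pl x (pl y z) = pl x (pl y z + sr y z)" for x y z
    using dendriform_assoc_left_imp_left_right_eq_0[OF assms]
    by (simp add: bilinear_op_distribs[OF pl])
  moreover have "pl (pl x y + sr x y) z = pl x (pl y z) + sr x (pl y z)" for x y z
    using assms(2) unfolding assoc_op_def by (simp add: bilinear_op_distribs[OF pl] ax2)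
  ultimately show ?thesis
    using assms pl bilinear_op_add[OF pl sr] dendriform_sum_assoc[OF assms(1)]
      bilinear_op_vector_space[OF pl]
    unfolding pre_dialgebra_I_def by blast
qed

lemma dendriform_assoc_right_pre_dialgebra_III:
  assumes "dendriform sc pl sr" and "assoc_op sr"
  shows "pre_dialgebra_III sc (\<lambda>a b. pl a b + sr a b) sr"
proof -
  from assms(1) have pl: "bilinear_op sc pl" and sr: "bilinear_op sc sr"
    and ax2: "\<And>a b c. pl (sr a b) c = sr a (pl b c)"
    unfolding dendriform_def by blast+
  have "pl (sr x y) z + sr (sr x y) z = sr x (pl y z + sr y z)" for x y z
    using assms(2) unfolding assoc_op_def by (simp add: bilinear_op_distribs[OF sr] ax2)
  moreover have "sr (pl x y + sr x y) z = sr (sr x y) z" for x y z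
    using dendriform_assoc_right_imp_right_left_eq_0[OF assms]
    by (simp add: bilinear_op_distribs[OF sr])
  ultimately show ?thesis
    using assms sr bilinear_op_add[OF pl sr] dendriform_sum_assoc[OF assms(1)]
      bilinear_op_vector_space[OF sr]
    unfolding pre_dialgebra_III_def by blast
qed

theorem mainTheorem10:
  fixes sc :: "'k::field \<Rightarrow> 'v::ab_group_add \<Rightarrow> 'v"
  shows "(\<forall>dl dr. pre_dialgebra_I sc dl dr \<longrightarrow>
            dendriform sc (\<lambda>a b. dl a b) (\<lambda>a b. dr a b - dl a b))
    \<and> (\<forall>dl dr. pre_dialgebra_III sc dl dr \<longrightarrow>
            dendriform sc (\<lambda>a b. dl a b - dr a b) (\<lambda>a b. dr a b))
    \<and> (\<forall>pl sr. dendriform sc pl sr \<and> assoc_op pl \<longrightarrow>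
            pre_dialgebra_I sc (\<lambda>a b. pl a b) (\<lambda>a b. pl a b + sr a b))
    \<and> (\<forall>pl sr. dendriform sc pl sr \<and> assoc_op sr \<longrightarrow>
            pre_dialgebra_III sc (\<lambda>a b. pl a b + sr a b) (\<lambda>a b. sr a b))"
  by (simp add: pre_dialgebra_I_dendriform pre_dialgebra_III_dendriform
      dendriform_assoc_left_pre_dialgebra_I dendriform_assoc_right_pre_dialgebra_III)

end
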